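(* Let $f$ be convex, $C^2$, with $\nabla^2 f\succ0$ everywhere, and $L_{\text{semi}}$-semi-strongly self-concordant; let $L_{\text{est}}\ge L_{\text{semi}}$ and $0<c<1$. If $x_k$ satisfies $\|\nabla f(x_k)\|_{x_k}^*\le\frac{(2c+1)^2-1}{2L_{\text{est}}}$ and $x_{k+1}$ is the AICN iterate computed from $x_k$, then $$[\nabla^2 f(x_{k+1})]^{-1}\preceq(1-c)^{-2}[\nabla^2 f(x_k)]^{-1}.$$
   Context: Local norms: $\|h\|_x=\langle\nabla^2 f(x)h,h\rangle^{1/2}$, $\|g\|_x^*=\langle g,[\nabla^2 f(x)]^{-1}g\rangle^{1/2}$; $\|H\|_{op}=\sup_{v\neq0}\|Hv\|_x^*/\|v\|_x$ at base point $x$. $f$ is $L_{\text{semi}}$-semi-strongly self-concordant if $\|\nabla^2 f(y)-\nabla^2 f(x)\|_{op}\le L_{\text{semi}}\|y-x\|_x$ for all $x,y$ (operator norm at base point $x$). AICN step with parameter $L_{\text{est}}>0$: $x_{k+1}=x_k-\alpha_k[\nabla^2 f(x_k)]^{-1}\nabla f(x_k)$ with $\alpha_k=\frac{-1+\sqrt{1+2L_{\text{est}}\|\nabla f(x_k)\|_{x_k}^*}}{L_{\text{est}}\|\nabla f(x_k)\|_{x_k}^*}$ (and $\alpha_k:=1$ if $\nabla f(x_k)=0$). $\preceq$ is the Loewner order. *)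

theory Defs
  imports "HOL-Analysis.Analysis"
begin

definition local_norm :: "(real^'a::finite \<Rightarrow> real^'a^'a) \<Rightarrow> real^'a \<Rightarrow> real^'a \<Rightarrow> real" where
  "local_norm H x h = sqrt (h \<bullet> (H x *v h))"

definition dual_norm :: "(real^'a::finite \<Rightarrow> real^'a^'a) \<Rightarrow> real^'a \<Rightarrow> real^'a \<Rightarrow> real" where
  "dual_norm H x g = sqrt (g \<bullet> (matrix_inv (H x) *v g))"

definition op_norm :: "(real^'a::finite \<Rightarrow> real^'a^'a) \<Rightarrow> real^'a \<Rightarrow> real^'a^'a \<Rightarrow> real" where
  "op_norm H x M = (SUP v\<in>{v. v \<noteq> 0}. dual_norm H x (M *v v) / local_norm H x v)"

definition semi_strongly_sc :: "(real^'a::finite \<Rightarrow> real^'a^'a) \<Rightarrow> real \<Rightarrow> bool" where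
  "semi_strongly_sc H L \<longleftrightarrow>
     (\<forall>x y. op_norm H x (H y - H x) \<le> L * local_norm H x (y - x))"

definition pos_def_mat :: "real^'a^'a \<Rightarrow> bool" where
  "pos_def_mat A \<longleftrightarrow> (\<forall>v. v \<noteq> 0 \<longrightarrow> v \<bullet> (A *v v) > 0)"

definition loewner_le :: "real^'a^'a \<Rightarrow> real^'a^'a \<Rightarrow> bool" where
  "loewner_le A B \<longleftrightarrow> (\<forall>v. v \<bullet> ((B - A) *v v) \<ge> 0)"

definition aicn_alpha :: "(real^'a::finite \<Rightarrow> real^'a) \<Rightarrow> (real^'a \<Rightarrow> real^'a^'a) \<Rightarrow> real \<Rightarrow> real^'a \<Rightarrow> real" where
  "aicn_alpha g H L x =
     (if g x = 0 then 1
      else (-1 + sqrt (1 + 2 * L * dual_norm H x (g x))) / (L * dual_norm H x (g x)))"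

definition aicn_step :: "(real^'a::finite \<Rightarrow> real^'a) \<Rightarrow> (real^'a \<Rightarrow> real^'a^'a) \<Rightarrow> real \<Rightarrow> real^'a \<Rightarrow> real^'a" where
  "aicn_step g H L x = x - aicn_alpha g H L x *\<^sub>R (matrix_inv (H x) *v g x)"

end

theory Submission
  imports Defs
begin

text \<open>Let \<open>h = x' - x\<close> be the AICN step from \<open>x\<close> and \<open>t = L\<^sub>e\<^sub>s\<^sub>t \<parallel>h\<parallel>\<^sub>x\<close>. The step size is
  chosen so that \<open>t = sqrt (1 + 2 L\<^sub>e\<^sub>s\<^sub>t \<parallel>\<nabla>f(x)\<parallel>\<^sup>*\<^sub>x) - 1\<close>, which the hypothesis bounds by \<open>2c\<close>.
  Semi-strong self-concordance at base point \<open>x\<close> gives \<open>\<parallel>h\<parallel>\<^sub>x\<^sub>' \<le> \<parallel>h\<parallel>\<^sub>x sqrt (1 + t)\<close>; used again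
  at base point \<open>x'\<close> it gives \<open>\<nabla>\<^sup>2f(x) \<preceq> (1 + t sqrt (1 + t)) \<nabla>\<^sup>2f(x')\<close>, and
  \<open>(1 - c)\<^sup>2 (1 + t sqrt (1 + t)) \<le> 1\<close> for \<open>0 \<le> t \<le> 2c < 2\<close>. Inverting this Loewner inequality
  gives the claim. The Cauchy--Schwarz inequalities behind these steps need symmetric Hessians,
  which is Schwarz's theorem for the continuous Hessian.\<close>

definition symmetric_mat :: "real^'a::finite^'a \<Rightarrow> bool" where
  "symmetric_mat S \<longleftrightarrow> (\<forall>p q. p \<bullet> (S *v q) = q \<bullet> (S *v p))"

lemma pos_def_mat_quadratic_nonneg: "pos_def_mat S \<Longrightarrow> 0 \<le> v \<bullet> (S *v v)"
  unfolding pos_def_mat_def by (cases "v = 0") (auto intro: less_imp_le)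

lemma pos_def_mat_matrix_inv:
  fixes S :: "real^'a::finite^'a"
  assumes "pos_def_mat S"
  shows "S ** matrix_inv S = mat 1 \<and> matrix_inv S ** S = mat 1"
proof -
  have "\<forall>x. S *v x = 0 \<longrightarrow> x = 0"
    using assms unfolding pos_def_mat_def by (metis inner_zero_right less_irrefl)
  then have "invertible S" using matrix_left_invertible_ker invertible_left_inverse by blast
  then show ?thesis unfolding matrix_inv_def invertible_def by (rule someI_ex)
qed

lemma pos_def_mat_mult_matrix_inv: "pos_def_mat S \<Longrightarrow> S *v (matrix_inv S *v v) = v"
  by (metis matrix_vector_mul_assoc matrix_vector_mul_lid pos_def_mat_matrix_inv)

lemma pos_def_mat_inv_quadratic_nonneg:
  assumes "pos_def_mat S" shows "0 \<le> v \<bullet> (matrix_inv S *v v)"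
proof -
  let ?w = "matrix_inv S *v v"
  have "v \<bullet> ?w = ?w \<bullet> (S *v ?w)"
    by (simp add: pos_def_mat_mult_matrix_inv[OF assms] inner_commute)
  then show ?thesis using pos_def_mat_quadratic_nonneg[OF assms] by simp
qed

lemma quadratic_nonneg_discriminant:
  fixes a b c :: real
  assumes "\<And>t. 0 \<le> a + 2*b*t + c*t^2" "c \<ge> 0"
  shows "b^2 \<le> a*c"
proof (cases "c = 0")
  case True
  have "b = 0"
  proof (rule ccontr)
    assume "b \<noteq> 0"
    have "0 \<le> a + 2*b*(-(a+1)/(2*b)) + c*(-(a+1)/(2*b))^2" by (rule assms)
    also have "\<dots> = -1" using True \<open>b \<noteq> 0\<close> by (simp add: field_simps)
    finally show False by simp
  qed
  then show ?thesis using True assms(1)[of 0] by simp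
next
  case False
  then have "c > 0" using assms(2) by simp
  have "0 \<le> a + 2*b*(-b/c) + c*(-b/c)^2" by (rule assms)
  also have "\<dots> = a - b^2/c" using \<open>c > 0\<close> by (simp add: field_simps power2_eq_square)
  finally show ?thesis using \<open>c > 0\<close> by (simp add: field_simps)
qed

lemma symmetric_psd_Cauchy_Schwarz:
  fixes S :: "real^'a::finite^'a"
  assumes "symmetric_mat S" "\<And>v. 0 \<le> v \<bullet> (S *v v)"
  shows "(p \<bullet> (S *v q))^2 \<le> (p \<bullet> (S *v p)) * (q \<bullet> (S *v q))"
proof (rule quadratic_nonneg_discriminant)
  fix t :: real
  have "q \<bullet> (S *v p) = p \<bullet> (S *v q)" using assms(1) unfolding symmetric_mat_def by metis
  then have "(p + t *\<^sub>R q) \<bullet> (S *v (p + t *\<^sub>R q))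
      = p \<bullet> (S *v p) + 2 * (p \<bullet> (S *v q)) * t + (q \<bullet> (S *v q)) * t^2"
    by (simp add: algebra_simps inner_add_left inner_add_right power2_eq_square)
  then show "0 \<le> p \<bullet> (S *v p) + 2 * (p \<bullet> (S *v q)) * t + (q \<bullet> (S *v q)) * t^2"
    by (metis assms(2))
qed (rule assms(2))

lemma pos_def_dual_Cauchy_Schwarz:
  fixes S :: "real^'a::finite^'a"
  assumes "pos_def_mat S" "symmetric_mat S"
  shows "(u \<bullet> m)^2 \<le> (u \<bullet> (S *v u)) * (m \<bullet> (matrix_inv S *v m))"
  using symmetric_psd_Cauchy_Schwarz[OF assms(2) pos_def_mat_quadratic_nonneg[OF assms(1)],
      of u "matrix_inv S *v m"]
  by (simp add: pos_def_mat_mult_matrix_inv[OF assms(1)] inner_commute)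

lemma quadratic_form_matrix_inv_antimono:
  fixes A B :: "real^'a::finite^'a"
  assumes pdA: "pos_def_mat A" and pdB: "pos_def_mat B" and syA: "symmetric_mat A" and "k > 0"
    and le: "\<And>v. k * (v \<bullet> (A *v v)) \<le> v \<bullet> (B *v v)"
  shows "v \<bullet> (matrix_inv B *v v) \<le> (1/k) * (v \<bullet> (matrix_inv A *v v))"
proof -
  let ?w = "matrix_inv B *v v"
  define \<beta> where "\<beta> = v \<bullet> ?w"
  define \<gamma> where "\<gamma> = v \<bullet> (matrix_inv A *v v)"
  have \<beta>: "\<beta> = ?w \<bullet> (B *v ?w)"
    unfolding \<beta>_def pos_def_mat_mult_matrix_inv[OF pdB] by (simp add: inner_commute)
  have "\<gamma> \<ge> 0" unfolding \<gamma>_def by (rule pos_def_mat_inv_quadratic_nonneg[OF pdA])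
  have "\<beta>^2 \<le> (?w \<bullet> (A *v ?w)) * \<gamma>"
    using pos_def_dual_Cauchy_Schwarz[OF pdA syA, of ?w v] unfolding \<beta>_def \<gamma>_def
    by (simp add: inner_commute)
  also have "\<dots> \<le> (\<beta> / k) * \<gamma>"
    using le[of ?w] \<open>k > 0\<close> \<open>\<gamma> \<ge> 0\<close> unfolding \<beta> by (intro mult_right_mono) (simp_all add: field_simps)
  finally have "\<beta> * \<beta> \<le> \<beta> * (\<gamma> / k)" by (simp add: power2_eq_square)
  moreover have "\<beta> \<ge> 0" unfolding \<beta> by (rule pos_def_mat_quadratic_nonneg[OF pdB])
  ultimately have "\<beta> \<le> \<gamma> / k"
    using \<open>k > 0\<close> \<open>\<gamma> \<ge> 0\<close> mult_left_le_imp_le[of \<beta> \<beta> "\<gamma> / k"] by (cases "\<beta> = 0") auto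
  then show ?thesis unfolding \<beta>_def \<gamma>_def by simp
qed

lemma local_norm_nonneg: "pos_def_mat (H x) \<Longrightarrow> 0 \<le> local_norm H x h"
  unfolding local_norm_def using pos_def_mat_quadratic_nonneg by simp

lemma dual_norm_nonneg: "pos_def_mat (H x) \<Longrightarrow> 0 \<le> dual_norm H x h"
  unfolding dual_norm_def using pos_def_mat_inv_quadratic_nonneg by simp

lemma local_norm_square: "pos_def_mat (H x) \<Longrightarrow> (local_norm H x h)^2 = h \<bullet> (H x *v h)"
  unfolding local_norm_def using pos_def_mat_quadratic_nonneg by simp

lemma dual_norm_square: "pos_def_mat (H x) \<Longrightarrow> (dual_norm H x h)^2 = h \<bullet> (matrix_inv (H x) *v h)"
  unfolding dual_norm_def using pos_def_mat_inv_quadratic_nonneg by simp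

lemma local_norm_pos: "pos_def_mat (H x) \<Longrightarrow> h \<noteq> 0 \<Longrightarrow> 0 < local_norm H x h"
  unfolding pos_def_mat_def local_norm_def by simp

lemma inner_le_local_norm_dual_norm:
  assumes pd: "pos_def_mat (H z)" and sy: "symmetric_mat (H z)"
  shows "\<bar>u \<bullet> m\<bar> \<le> local_norm H z u * dual_norm H z m"
proof -
  have "(u \<bullet> m)^2 \<le> (local_norm H z u * dual_norm H z m)^2"
    using pos_def_dual_Cauchy_Schwarz[OF pd sy, of u m]
    by (simp add: power_mult_distrib local_norm_square[of H z, OF pd] dual_norm_square[of H z, OF pd])
  then have "\<bar>u \<bullet> m\<bar> \<le> \<bar>local_norm H z u * dual_norm H z m\<bar>" by (simp add: abs_le_square_iff)
  then show ?thesis using local_norm_nonneg[of H z, OF pd] dual_norm_nonneg[of H z, OF pd] by simp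
qed

lemma pos_def_local_dual_norm_bounds:
  fixes H :: "real^'a::finite \<Rightarrow> real^'a^'a"
  assumes pd: "pos_def_mat (H z)" and sy: "symmetric_mat (H z)"
  obtains B where "B > 0" "\<And>m. (dual_norm H z m)^2 \<le> B * (norm m)^2"
    "\<And>x. (norm x)^2 \<le> B * (local_norm H z x)^2"
proof -
  obtain B where "B > 0" and B: "\<And>x. norm (matrix_inv (H z) *v x) \<le> B * norm x"
    using linear_bounded_pos[OF matrix_vector_mul_linear] by blast
  have dual: "(dual_norm H z m)^2 \<le> B * (norm m)^2" for m
  proof -
    have "(dual_norm H z m)^2 \<le> norm m * norm (matrix_inv (H z) *v m)"
      unfolding dual_norm_square[of H z, OF pd] by (rule norm_cauchy_schwarz)
    also have "\<dots> \<le> norm m * (B * norm m)" by (rule mult_left_mono[OF B]) simp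
    finally show ?thesis by (simp add: power2_eq_square algebra_simps)
  qed
  have "(norm x)^2 \<le> B * (local_norm H z x)^2" for x
  proof (cases "x = 0")
    case False
    have "(norm x)^2 * (norm x)^2 = (x \<bullet> x)^2" by (simp add: dot_square_norm)
    also have "\<dots> \<le> (local_norm H z x)^2 * (dual_norm H z x)^2"
      using pos_def_dual_Cauchy_Schwarz[OF pd sy, of x x]
      by (simp add: local_norm_square[of H z, OF pd] dual_norm_square[of H z, OF pd])
    also have "\<dots> \<le> (local_norm H z x)^2 * (B * (norm x)^2)" by (rule mult_left_mono[OF dual]) simp
    finally have "(norm x)^2 * (norm x)^2 \<le> (B * (local_norm H z x)^2) * (norm x)^2"
      by (simp add: algebra_simps)
    then show ?thesis by (rule mult_right_le_imp_le) (use False in simp)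
  qed (use \<open>B > 0\<close> in simp)
  with \<open>B > 0\<close> dual show thesis by (rule that)
qed

lemma op_norm_bdd_above:
  fixes H :: "real^'a::finite \<Rightarrow> real^'a^'a"
  assumes pd: "pos_def_mat (H z)" and sy: "symmetric_mat (H z)"
  shows "bdd_above ((\<lambda>v. dual_norm H z (M *v v) / local_norm H z v) ` {v. v \<noteq> 0})"
proof -
  obtain B where "B > 0" and dual: "\<And>m. (dual_norm H z m)^2 \<le> B * (norm m)^2"
    and local: "\<And>x. (norm x)^2 \<le> B * (local_norm H z x)^2"
    using pos_def_local_dual_norm_bounds[of H z, OF pd sy] by blast
  obtain C where "C > 0" and C: "\<And>x. norm (M *v x) \<le> C * norm x"
    using linear_bounded_pos[OF matrix_vector_mul_linear] by blast
  have bound: "dual_norm H z (M *v w) \<le> B * C * local_norm H z w" for w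
  proof -
    have "(dual_norm H z (M *v w))^2 \<le> B * (C * norm w)^2"
      using dual[of "M *v w"] C[of w] \<open>B > 0\<close>
      by (smt (verit) mult_left_mono norm_ge_zero power_mono)
    also have "\<dots> \<le> B * C^2 * (B * (local_norm H z w)^2)"
      using mult_left_mono[OF local[of w], of "B * C^2"] \<open>B > 0\<close> by (simp add: power_mult_distrib)
    also have "\<dots> = (B * C * local_norm H z w)^2" by (simp add: power_mult_distrib power2_eq_square)
    finally show ?thesis
      using \<open>B > 0\<close> \<open>C > 0\<close> local_norm_nonneg[of H z, OF pd] by (meson mult_nonneg_nonneg power2_le_imp_le less_imp_le)
  qed
  show ?thesis
  proof (rule bdd_aboveI2)
    fix w :: "real^'a" assume "w \<in> {v. v \<noteq> 0}"
    then show "dual_norm H z (M *v w) / local_norm H z w \<le> B * C"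
      using bound[of w] local_norm_pos[of H z, OF pd] by (simp add: divide_le_eq)
  qed
qed

lemma dual_norm_le_op_norm:
  fixes H :: "real^'a::finite \<Rightarrow> real^'a^'a"
  assumes pd: "pos_def_mat (H z)" and sy: "symmetric_mat (H z)"
  shows "dual_norm H z (M *v v) \<le> op_norm H z M * local_norm H z v"
proof (cases "v = 0")
  case True
  then show ?thesis by (simp add: local_norm_def dual_norm_def)
next
  case False
  have "dual_norm H z (M *v v) / local_norm H z v \<le> op_norm H z M"
    unfolding op_norm_def by (rule cSUP_upper[OF _ op_norm_bdd_above[of H z, OF pd sy]]) (use False in simp)
  then show ?thesis using local_norm_pos[of H z, OF pd False] by (simp add: divide_le_eq)
qed

lemma second_difference_mean_value:
  fixes f :: "real^'n \<Rightarrow> real" and g :: "real^'n \<Rightarrow> real^'n" and H :: "real^'n \<Rightarrow> real^'n^'n"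
  assumes grad: "\<And>x. (f has_derivative (\<lambda>h. g x \<bullet> h)) (at x)"
    and hess: "\<And>x. (g has_derivative (\<lambda>h. H x *v h)) (at x)"
    and s: "s > 0"
  shows "\<exists>\<xi>. norm (\<xi> - x) \<le> s * (norm u + norm w) \<and>
    f (x + s *\<^sub>R u + s *\<^sub>R w) - f (x + s *\<^sub>R u) - f (x + s *\<^sub>R w) + f x = s^2 * (u \<bullet> (H \<xi> *v w))"
proof -
  let ?D = "\<lambda>t. g (x + t *\<^sub>R u + s *\<^sub>R w) \<bullet> u - g (x + t *\<^sub>R u) \<bullet> u"
  have d1: "((\<lambda>t. f (x + t *\<^sub>R u + s *\<^sub>R w)) has_derivative (\<lambda>h. g (x + t *\<^sub>R u + s *\<^sub>R w) \<bullet> (h *\<^sub>R u))) (at t within T)" for t T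
    by (rule has_derivative_compose[OF _ grad]) (auto intro!: derivative_eq_intros)
  have d2: "((\<lambda>t. f (x + t *\<^sub>R u)) has_derivative (\<lambda>h. g (x + t *\<^sub>R u) \<bullet> (h *\<^sub>R u))) (at t within T)" for t T
    by (rule has_derivative_compose[OF _ grad]) (auto intro!: derivative_eq_intros)
  have dphi: "((\<lambda>t. f (x + t *\<^sub>R u + s *\<^sub>R w) - f (x + t *\<^sub>R u)) has_derivative (\<lambda>h. h * ?D t)) (at t within T)" for t T
    by (rule has_derivative_eq_rhs[OF has_derivative_diff[OF d1 d2]]) (auto simp: algebra_simps)
  obtain t where t: "t \<in> {0<..<s}" and
    eq1: "(f (x + s *\<^sub>R u + s *\<^sub>R w) - f (x + s *\<^sub>R u)) - (f (x + 0 *\<^sub>R u + s *\<^sub>R w) - f (x + 0 *\<^sub>R u)) = (s - 0) * ?D t"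
    using mvt_simple[OF s, of "\<lambda>t. f (x + t *\<^sub>R u + s *\<^sub>R w) - f (x + t *\<^sub>R u)" "\<lambda>t h. h * ?D t"] dphi by blast
  let ?E = "\<lambda>r. u \<bullet> (H (x + t *\<^sub>R u + r *\<^sub>R w) *v w)"
  have d3: "((\<lambda>r. g (x + t *\<^sub>R u + r *\<^sub>R w)) has_derivative (\<lambda>h. H (x + t *\<^sub>R u + r *\<^sub>R w) *v (h *\<^sub>R w))) (at r within T)" for r T
    by (rule has_derivative_compose[OF _ hess]) (auto intro!: derivative_eq_intros)
  have dpsi: "((\<lambda>r. u \<bullet> g (x + t *\<^sub>R u + r *\<^sub>R w)) has_derivative (\<lambda>h. h * ?E r)) (at r within T)" for r T
    by (rule has_derivative_eq_rhs[OF has_derivative_inner_right[OF d3]]) (auto simp: matrix_vector_mult_scaleR)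
  obtain r where r: "r \<in> {0<..<s}" and
    eq2: "u \<bullet> g (x + t *\<^sub>R u + s *\<^sub>R w) - u \<bullet> g (x + t *\<^sub>R u + 0 *\<^sub>R w) = (s - 0) * ?E r"
    using mvt_simple[OF s, of "\<lambda>r. u \<bullet> g (x + t *\<^sub>R u + r *\<^sub>R w)" "\<lambda>r h. h * ?E r"] dpsi by blast
  have "?D t = s * ?E r" using eq2 by (simp add: inner_commute)
  then have Deq: "f (x + s *\<^sub>R u + s *\<^sub>R w) - f (x + s *\<^sub>R u) - f (x + s *\<^sub>R w) + f x = s^2 * ?E r"
    using eq1 by (simp add: power2_eq_square algebra_simps)
  have "norm ((x + t *\<^sub>R u + r *\<^sub>R w) - x) \<le> norm (t *\<^sub>R u) + norm (r *\<^sub>R w)"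
    using norm_triangle_ineq[of "t *\<^sub>R u" "r *\<^sub>R w"] by (simp add: algebra_simps)
  also have "\<dots> = t * norm u + r * norm w" using t r by simp
  also have "\<dots> \<le> s * norm u + s * norm w"
    using t r by (intro add_mono mult_right_mono) auto
  finally show ?thesis using Deq by (intro exI[of _ "x + t *\<^sub>R u + r *\<^sub>R w"]) (simp add: algebra_simps)
qed

lemma continuous_on_bilinear_form:
  fixes H :: "real^'n \<Rightarrow> real^'n^'n"
  assumes "continuous_on UNIV H"
  shows "continuous_on UNIV (\<lambda>z. u \<bullet> (H z *v w))"
proof -
  have "linear (\<lambda>A::real^'n^'n. A *v w)"
    by (auto simp: linear_iff matrix_vector_mult_add_rdistrib scaleR_matrix_vector_assoc)
  then have "continuous_on UNIV (\<lambda>A::real^'n^'n. A *v w)"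
    by (simp add: linear_continuous_on linear_conv_bounded_linear)
  then have "continuous_on UNIV (\<lambda>z. H z *v w)"
    using continuous_on_compose[OF assms continuous_on_subset[OF _ subset_UNIV], of "\<lambda>A. A *v w"] by (simp add: o_def)
  then show ?thesis by (intro continuous_intros)
qed

lemma hessian_symmetric:
  fixes f :: "real^'n \<Rightarrow> real" and g :: "real^'n \<Rightarrow> real^'n" and H :: "real^'n \<Rightarrow> real^'n^'n"
  assumes grad: "\<And>x. (f has_derivative (\<lambda>h. g x \<bullet> h)) (at x)"
    and hess: "\<And>x. (g has_derivative (\<lambda>h. H x *v h)) (at x)"
    and cont: "continuous_on UNIV H"
  shows "symmetric_mat (H x)"
  unfolding symmetric_mat_def
proof (intro allI, rule ccontr)
  fix u w
  let ?F = "\<lambda>z. u \<bullet> (H z *v w)" and ?G = "\<lambda>z. w \<bullet> (H z *v u)"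
  assume "?F x \<noteq> ?G x"
  define e where "e = \<bar>?F x - ?G x\<bar> / 2"
  have "e > 0" using \<open>?F x \<noteq> ?G x\<close> by (simp add: e_def)
  obtain d1 where d1: "d1 > 0" "\<And>z. dist z x < d1 \<Longrightarrow> dist (?F z) (?F x) < e"
    using continuous_on_bilinear_form[OF cont, of u w] \<open>e > 0\<close> unfolding continuous_on_iff by (metis UNIV_I)
  obtain d2 where d2: "d2 > 0" "\<And>z. dist z x < d2 \<Longrightarrow> dist (?G z) (?G x) < e"
    using continuous_on_bilinear_form[OF cont, of w u] \<open>e > 0\<close> unfolding continuous_on_iff by (metis UNIV_I)
  define s where "s = min d1 d2 / (2 * (norm u + norm w + 1))"
  have "norm u + norm w + 1 > 0" using norm_ge_zero[of u] norm_ge_zero[of w] by linarith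
  have "s > 0" using d1 d2 \<open>norm u + norm w + 1 > 0\<close> unfolding s_def by (intro divide_pos_pos) auto
  have s_small: "s * (norm u + norm w) < min d1 d2"
  proof -
    have "s * (norm u + norm w) < s * (norm u + norm w + 1)" using \<open>s > 0\<close> by simp
    also have "\<dots> = min d1 d2 / 2" unfolding s_def
      using \<open>norm u + norm w + 1 > 0\<close> by (simp add: field_simps)
    finally show ?thesis using d1 d2 by simp
  qed
  \<comment> \<open>The second difference of \<open>f\<close> is symmetric in \<open>u\<close> and \<open>w\<close>.\<close>
  obtain \<xi> where \<xi>: "norm (\<xi> - x) \<le> s * (norm u + norm w)"
    "f (x + s *\<^sub>R u + s *\<^sub>R w) - f (x + s *\<^sub>R u) - f (x + s *\<^sub>R w) + f x = s^2 * ?F \<xi>"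
    using second_difference_mean_value[OF grad hess \<open>s > 0\<close>, of x u w] by blast
  obtain \<zeta> where \<zeta>: "norm (\<zeta> - x) \<le> s * (norm w + norm u)"
    "f (x + s *\<^sub>R w + s *\<^sub>R u) - f (x + s *\<^sub>R w) - f (x + s *\<^sub>R u) + f x = s^2 * ?G \<zeta>"
    using second_difference_mean_value[OF grad hess \<open>s > 0\<close>, of x w u] by blast
  have "s^2 * ?F \<xi> = s^2 * ?G \<zeta>" using \<xi>(2) \<zeta>(2) by (simp add: algebra_simps)
  then have FG: "?F \<xi> = ?G \<zeta>" using \<open>s > 0\<close> by simp
  have "dist (?F \<xi>) (?F x) < e" using d1(2)[of \<xi>] \<xi>(1) s_small by (simp add: dist_norm)
  moreover have "dist (?G \<zeta>) (?G x) < e" using d2(2)[of \<zeta>] \<zeta>(1) s_small by (simp add: dist_norm add.commute)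
  ultimately show False using FG unfolding e_def dist_real_def by (simp add: abs_if split: if_splits)
qed

lemma semi_strongly_sc_quadratic_form:
  fixes H :: "real^'a::finite \<Rightarrow> real^'a^'a"
  assumes pd: "pos_def_mat (H z)" and sy: "symmetric_mat (H z)"
    and sc: "semi_strongly_sc H Ls" and "Ls \<le> L"
  shows "\<bar>u \<bullet> ((H w - H z) *v u)\<bar> \<le> L * local_norm H z (w - z) * (u \<bullet> (H z *v u))"
proof -
  let ?M = "H w - H z" and ?lu = "local_norm H z u" and ?l = "local_norm H z (w - z)"
  have "?lu \<ge> 0" "?l \<ge> 0" using local_norm_nonneg[of H z, OF pd] by auto
  have "op_norm H z ?M \<le> Ls * ?l" using sc unfolding semi_strongly_sc_def by blast
  also have "\<dots> \<le> L * ?l" by (rule mult_right_mono[OF \<open>Ls \<le> L\<close> \<open>?l \<ge> 0\<close>])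
  finally have op: "op_norm H z ?M \<le> L * ?l" .
  have "\<bar>u \<bullet> (?M *v u)\<bar> \<le> ?lu * dual_norm H z (?M *v u)"
    by (rule inner_le_local_norm_dual_norm[of H z, OF pd sy])
  also have "\<dots> \<le> ?lu * (op_norm H z ?M * ?lu)"
    by (rule mult_left_mono[OF dual_norm_le_op_norm[of H z, OF pd sy] \<open>?lu \<ge> 0\<close>])
  also have "\<dots> \<le> ?lu * (L * ?l * ?lu)"
    using \<open>?lu \<ge> 0\<close> op by (intro mult_left_mono mult_right_mono) auto
  also have "\<dots> = L * ?l * (u \<bullet> (H z *v u))"
    by (simp add: local_norm_square[of H z, OF pd, symmetric] power2_eq_square)
  finally show ?thesis .
qed

lemma semi_strongly_sc_local_norm_reverse:
  fixes H :: "real^'a::finite \<Rightarrow> real^'a^'a"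
  assumes pd: "\<And>z. pos_def_mat (H z)" and sy: "symmetric_mat (H x)"
    and sc: "semi_strongly_sc H Ls" and "Ls \<le> L" and "0 \<le> L"
  shows "local_norm H y (x - y) \<le> local_norm H x (y - x) * sqrt (1 + L * local_norm H x (y - x))"
proof -
  let ?h = "y - x" and ?r = "local_norm H x (y - x)"
  have "?r \<ge> 0" by (rule local_norm_nonneg[of H x, OF pd])
  have "\<bar>?h \<bullet> ((H y - H x) *v ?h)\<bar> \<le> L * ?r * ?r^2"
    using semi_strongly_sc_quadratic_form[of H x, OF pd sy sc \<open>Ls \<le> L\<close>, of ?h y]
    by (simp add: local_norm_square[of H x, OF pd])
  moreover have "?h \<bullet> ((H y - H x) *v ?h) = ?h \<bullet> (H y *v ?h) - ?r^2"
    by (simp add: local_norm_square[of H x, OF pd] matrix_vector_mult_diff_rdistrib inner_diff_right)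
  ultimately have "?h \<bullet> (H y *v ?h) \<le> ?r^2 + L * ?r * ?r^2"
    by (simp add: abs_le_iff)
  also have "\<dots> = (?r * sqrt (1 + L * ?r))^2"
    using \<open>?r \<ge> 0\<close> \<open>0 \<le> L\<close> by (simp add: power_mult_distrib algebra_simps)
  finally have "?h \<bullet> (H y *v ?h) \<le> (?r * sqrt (1 + L * ?r))^2" .
  moreover have "(local_norm H y (x - y))^2 = ?h \<bullet> (H y *v ?h)"
    using local_norm_square[of H y, OF pd, of "x - y"] matrix_vector_mult_diff_distrib[of "H y" 0 ?h]
    by (simp add: inner_diff_left inner_diff_right)
  ultimately have "(local_norm H y (x - y))^2 \<le> (?r * sqrt (1 + L * ?r))^2" by simp
  moreover have "0 \<le> ?r * sqrt (1 + L * ?r)" using \<open>?r \<ge> 0\<close> \<open>0 \<le> L\<close> by simp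
  ultimately show ?thesis by (rule power2_le_imp_le)
qed

lemma one_minus_squared_mult_le_1:
  fixes c t :: real
  assumes "0 \<le> t" "t \<le> 2 * c" "c < 1"
  shows "(1 - c)^2 * (1 + t * sqrt (1 + t)) \<le> 1"
proof -
  let ?s = "sqrt (1 + t)" and ?a = "1 - t / 2"
  have "?a \<ge> 0" "?s \<ge> 0" using assms by simp_all
  have "(?s * ?a)^2 = 1 - t^2 * (3 - t) / 4"
    using assms by (simp add: power_mult_distrib power2_eq_square field_simps)
  also have "\<dots> \<le> 1" using assms by simp
  finally have sa: "?s * ?a \<le> 1" using power2_le_imp_le[of "?s * ?a" 1] by simp
  have "(1 - c)^2 * (1 + t * ?s) \<le> ?a^2 * (1 + t * ?s)"
    using assms \<open>?s \<ge> 0\<close> by (intro mult_right_mono power_mono) auto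
  also have "\<dots> = ?a^2 + t * ?a * (?s * ?a)" by (simp add: power2_eq_square field_simps)
  also have "\<dots> \<le> ?a^2 + t * ?a" using assms \<open>?a \<ge> 0\<close> sa
    by (intro add_left_mono) (simp add: mult_left_le)
  also have "\<dots> = 1 - t^2 / 4" by (simp add: power2_eq_square algebra_simps)
  also have "\<dots> \<le> 1" by simp
  finally show ?thesis .
qed

lemma semi_strongly_sc_hessian_lower_bound:
  fixes H :: "real^'a::finite \<Rightarrow> real^'a^'a"
  assumes pd: "\<And>z. pos_def_mat (H z)" and sy: "\<And>z. symmetric_mat (H z)"
    and sc: "semi_strongly_sc H Ls" and "Ls \<le> L" and "0 \<le> L"
    and step: "L * local_norm H x (y - x) \<le> 2 * c" and "c < 1"
  shows "(1 - c)^2 * (v \<bullet> (H x *v v)) \<le> v \<bullet> (H y *v v)"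
proof -
  define t where "t = L * local_norm H x (y - x)"
  have "0 \<le> t" unfolding t_def using \<open>0 \<le> L\<close> local_norm_nonneg[of H x, OF pd] by simp
  have "L * local_norm H y (x - y) \<le> L * (local_norm H x (y - x) * sqrt (1 + t))"
    unfolding t_def
    by (rule mult_left_mono[OF semi_strongly_sc_local_norm_reverse[OF pd sy sc \<open>Ls \<le> L\<close> \<open>0 \<le> L\<close>]
          \<open>0 \<le> L\<close>])
  then have "L * local_norm H y (x - y) \<le> t * sqrt (1 + t)" unfolding t_def by (simp only: mult.assoc)
  moreover have "\<bar>v \<bullet> ((H x - H y) *v v)\<bar> \<le> L * local_norm H y (x - y) * (v \<bullet> (H y *v v))"
    by (rule semi_strongly_sc_quadratic_form[of H y, OF pd sy sc \<open>Ls \<le> L\<close>])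
  moreover have "v \<bullet> ((H x - H y) *v v) = v \<bullet> (H x *v v) - v \<bullet> (H y *v v)"
    by (simp add: matrix_vector_mult_diff_rdistrib inner_diff_right)
  moreover have q: "0 \<le> v \<bullet> (H y *v v)" by (rule pos_def_mat_quadratic_nonneg[OF pd])
  ultimately have "v \<bullet> (H x *v v) \<le> (1 + t * sqrt (1 + t)) * (v \<bullet> (H y *v v))"
    using mult_right_mono[of "L * local_norm H y (x - y)" "t * sqrt (1 + t)" "v \<bullet> (H y *v v)"]
    by (simp add: distrib_right abs_le_iff)
  then have "(1 - c)^2 * (v \<bullet> (H x *v v)) \<le> (1 - c)^2 * ((1 + t * sqrt (1 + t)) * (v \<bullet> (H y *v v)))"
    by (rule mult_left_mono) simp
  also have "\<dots> = ((1 - c)^2 * (1 + t * sqrt (1 + t))) * (v \<bullet> (H y *v v))"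
    by (rule mult.assoc[symmetric])
  also have "\<dots> \<le> 1 * (v \<bullet> (H y *v v))"
    by (rule mult_right_mono[OF one_minus_squared_mult_le_1[OF \<open>0 \<le> t\<close> step[folded t_def] \<open>c < 1\<close>] q])
  finally show ?thesis by simp
qed

lemma local_norm_aicn_step:
  assumes pd: "pos_def_mat (H x)"
  shows "local_norm H x (aicn_step g H L x - x) = \<bar>aicn_alpha g H L x\<bar> * dual_norm H x (g x)"
proof -
  let ?\<alpha> = "aicn_alpha g H L x" and ?d = "matrix_inv (H x) *v g x"
  have "aicn_step g H L x - x = (- ?\<alpha>) *\<^sub>R ?d" unfolding aicn_step_def by simp
  then have "(local_norm H x (aicn_step g H L x - x))^2 = ((- ?\<alpha>) *\<^sub>R ?d) \<bullet> (H x *v ((- ?\<alpha>) *\<^sub>R ?d))"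
    by (simp only: local_norm_square[of H x, OF pd])
  also have "\<dots> = ?\<alpha>^2 * (?d \<bullet> (H x *v ?d))"
    by (simp add: matrix_vector_mult_scaleR power2_eq_square del: scaleR_minus_left)
  also have "\<dots> = (\<bar>?\<alpha>\<bar> * dual_norm H x (g x))^2"
    by (simp add: dual_norm_square[of H x, OF pd] pos_def_mat_mult_matrix_inv[OF pd] inner_commute
        power_mult_distrib)
  finally show ?thesis
    using local_norm_nonneg[of H x, OF pd] dual_norm_nonneg[of H x, OF pd]
    by (metis abs_ge_zero mult_nonneg_nonneg power2_eq_iff_nonneg)
qed

lemma aicn_step_local_norm_le:
  assumes pd: "pos_def_mat (H x)" and "0 < L" and "0 \<le> c"
    and small: "dual_norm H x (g x) \<le> ((2 * c + 1)^2 - 1) / (2 * L)"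
  shows "L * local_norm H x (aicn_step g H L x - x) \<le> 2 * c"
proof (cases "dual_norm H x (g x) = 0")
  case True
  then show ?thesis using \<open>0 \<le> c\<close> by (simp add: local_norm_aicn_step[of H x, OF pd])
next
  case False
  define G where "G = dual_norm H x (g x)"
  have "G > 0" using False dual_norm_nonneg[of H x "g x", OF pd] unfolding G_def by simp
  then have "g x \<noteq> 0" unfolding G_def dual_norm_def by auto
  have "0 < L * G" using \<open>0 < L\<close> \<open>G > 0\<close> by simp
  have alpha: "aicn_alpha g H L x = (sqrt (1 + 2 * L * G) - 1) / (L * G)"
    using \<open>g x \<noteq> 0\<close> unfolding aicn_alpha_def G_def by simp
  have "1 \<le> sqrt (1 + 2 * L * G)" using \<open>0 < L\<close> \<open>0 < G\<close> by simp
  then have "L * local_norm H x (aicn_step g H L x - x) = sqrt (1 + 2 * L * G) - 1"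
    using \<open>0 < L * G\<close> by (simp add: local_norm_aicn_step[of H x, OF pd] alpha flip: G_def)
  also have "\<dots> \<le> sqrt ((2 * c + 1)^2) - 1"
    using small \<open>0 < L\<close> unfolding G_def
    by (intro diff_right_mono real_sqrt_le_mono) (simp add: field_simps)
  also have "\<dots> = 2 * c" using \<open>0 \<le> c\<close> by simp
  finally show ?thesis .
qed

theorem lemma7:
  fixes f :: "real^'n \<Rightarrow> real"
    and g :: "real^'n \<Rightarrow> real^'n"
    and H :: "real^'n \<Rightarrow> real^'n^'n"
    and L_semi L_est c :: real
    and xk :: "real^'n"
  assumes convex: "convex_on UNIV f"
    and grad: "\<And>x. (f has_derivative (\<lambda>h. g x \<bullet> h)) (at x)"
    and hess: "\<And>x. (g has_derivative (\<lambda>h. H x *v h)) (at x)"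
    and hess_cont: "continuous_on UNIV H"
    and pd: "\<And>x. pos_def_mat (H x)"
    and sc: "semi_strongly_sc H L_semi"
    and L_pos: "0 < L_est"
    and L_ge: "L_semi \<le> L_est"
    and c: "0 < c" "c < 1"
    and small: "dual_norm H xk (g xk) \<le> ((2 * c + 1)^2 - 1) / (2 * L_est)"
  shows "loewner_le (matrix_inv (H (aicn_step g H L_est xk)))
                    ((1 / (1 - c)^2) *\<^sub>R matrix_inv (H xk))"
proof -
  define y where "y = aicn_step g H L_est xk"
  have sy: "\<And>z. symmetric_mat (H z)" by (rule hessian_symmetric[OF grad hess hess_cont])
  have "L_est * local_norm H xk (y - xk) \<le> 2 * c"
    unfolding y_def using aicn_step_local_norm_le[of H xk L_est c g, OF pd L_pos _ small] c by simp
  then have "(1 - c)^2 * (v \<bullet> (H xk *v v)) \<le> v \<bullet> (H y *v v)" for v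
    using semi_strongly_sc_hessian_lower_bound[OF pd sy sc L_ge] L_pos c by simp
  then have "v \<bullet> (matrix_inv (H y) *v v) \<le> (1 / (1 - c)^2) * (v \<bullet> (matrix_inv (H xk) *v v))" for v
    using c by (intro quadratic_form_matrix_inv_antimono[OF pd pd sy]) simp_all
  then show ?thesis
    unfolding loewner_le_def y_def[symmetric]
    by (simp add: matrix_vector_mult_diff_rdistrib inner_diff_right scaleR_matrix_vector_assoc[symmetric])
qed

end
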